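(* Let $S_A>0$, $\theta\geq0$, $\lambda\geq0$, $B\geq1$ an integer, $V_k\in(0,1]$ and $S_M\geq0$. Let $\rho(\zeta)=\zeta e^{-\zeta}$, $\hat\nu(V,\Lambda)=V/(1+V\Lambda)$, and for $\zeta\in(0,1)$ let $$g(S_M,\zeta,V_k)=\sum_{r=0}^{B}\binom{B}{r}\rho(\zeta)^r(1-\rho(\zeta))^{B-r}\,\hat\nu\left(V_k,\frac{rS_AS_M}{S_A+S_M}\right)\frac{r-\rho(\zeta)B}{\rho(\zeta)(1-\rho(\zeta))}+\lambda B\frac{e^{\zeta}}{1-\zeta}(1+\theta S_M).$$ Then $\zeta\mapsto g(S_M,\zeta,V_k)$ is an increasing function of $\zeta\in(0,1)$.
   Context: In the decentralized myopic sensing policy (large-network limit, $B$ collision channels), $g$ is, up to the positive factor $e^{\zeta}/(1-\zeta)$, the derivative with respect to the normalized activation probability $\zeta$ of the one-slot cost $\sum_r\mathcal B_B(r;\rho(\zeta))\hat\nu(V_k,rS_AS_M/(S_A+S_M))+\lambda\zeta B(1+\theta S_M)$; here $V_k$ is the prior variance, $S_A$ the ambient SNR, $S_M$ the local measurement SNR. *)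

theory Defs
  imports Complex_Main
begin

definition rho :: "real \<Rightarrow> real" where
  "rho \<zeta> = \<zeta> * exp (- \<zeta>)"

definition nu_hat :: "real \<Rightarrow> real \<Rightarrow> real" where
  "nu_hat V \<Lambda> = V / (1 + V * \<Lambda>)"

definition g_fun :: "real \<Rightarrow> real \<Rightarrow> real \<Rightarrow> nat \<Rightarrow> real \<Rightarrow> real \<Rightarrow> real \<Rightarrow> real" where
  "g_fun S_A \<theta> lam B S_M \<zeta> V_k =
     (\<Sum>r=0..B. real (B choose r) * rho \<zeta> ^ r * (1 - rho \<zeta>) ^ (B - r)
        * nu_hat V_k (real r * S_A * S_M / (S_A + S_M))
        * ((real r - rho \<zeta> * real B) / (rho \<zeta> * (1 - rho \<zeta>))))
     + lam * real B * (exp \<zeta> / (1 - \<zeta>)) * (1 + \<theta> * S_M)"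

end

theory Submission
  imports Defs
begin

(* Write p = rho zeta and h r = nu_hat V_k (r c) with c = S_A S_M / (S_A + S_M).
   The factor (r - B p) / (p (1 - p)) is the logarithmic derivative in p of the binomial
   weight, so the sum in g is d/dp E h(X) for X ~ Bin(B, p), which equals
   B E (h(Y + 1) - h(Y)) for Y ~ Bin(B - 1, p). Since h is convex its forward differences
   increase, and the binomial mean of an increasing function increases with p, by the same
   derivative formula. As rho increases on (0, 1), so does the first summand of g; the
   second is a nonnegative multiple of exp zeta / (1 - zeta). *)

definition forward_diff :: "(nat \<Rightarrow> real) \<Rightarrow> nat \<Rightarrow> real" where
  "forward_diff f s = f (Suc s) - f s"

definition binomial_mean :: "nat \<Rightarrow> (nat \<Rightarrow> real) \<Rightarrow> real \<Rightarrow> real" where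
  "binomial_mean m f p = (\<Sum>r=0..m. real (m choose r) * p ^ r * (1 - p) ^ (m - r) * f r)"

lemma sum_binomial_index_weighted:
  fixes p q :: real
  shows "(\<Sum>r=0..Suc k. real r * real (Suc k choose r) * p ^ r * q ^ (Suc k - r) * f r)
    = real (Suc k) * p * (\<Sum>s=0..k. real (k choose s) * p ^ s * q ^ (k - s) * f (Suc s))"
proof -
  have absorb: "real (Suc s) * real (Suc k choose Suc s) = real (Suc k) * real (k choose s)" for s
    by (metis Suc_times_binomial of_nat_mult)
  have "(\<Sum>r=0..Suc k. real r * real (Suc k choose r) * p ^ r * q ^ (Suc k - r) * f r)
      = (\<Sum>s=0..k. real (Suc s) * real (Suc k choose Suc s) * p ^ Suc s * q ^ (k - s) * f (Suc s))"
    by (subst sum.atLeast0_atMost_Suc_shift) (simp del: binomial_Suc_Suc of_nat_Suc)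
  also have "\<dots> = real (Suc k) * p * (\<Sum>s=0..k. real (k choose s) * p ^ s * q ^ (k - s) * f (Suc s))"
    unfolding absorb sum_distrib_left by (rule sum.cong) (simp_all add: algebra_simps)
  finally show ?thesis .
qed

lemma sum_binomial_coindex_weighted:
  fixes p q :: real
  shows "(\<Sum>r=0..Suc k. real (Suc k - r) * real (Suc k choose r) * p ^ r * q ^ (Suc k - r) * f r)
    = real (Suc k) * q * (\<Sum>s=0..k. real (k choose s) * p ^ s * q ^ (k - s) * f s)"
proof -
  have absorb: "real (Suc k - s) * real (Suc k choose s) = real (Suc k) * real (k choose s)" for s
    by (metis binomial_absorb_comp diff_Suc_1 of_nat_mult)
  have "(\<Sum>r=0..Suc k. real (Suc k - r) * real (Suc k choose r) * p ^ r * q ^ (Suc k - r) * f r)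
      = (\<Sum>s=0..k. real (Suc k - s) * real (Suc k choose s) * p ^ s * q ^ Suc (k - s) * f s)"
    by (subst sum.atLeast0_atMost_Suc) (auto intro!: sum.cong simp: Suc_diff_le simp del: of_nat_Suc)
  also have "\<dots> = real (Suc k) * q * (\<Sum>s=0..k. real (k choose s) * p ^ s * q ^ (k - s) * f s)"
    unfolding absorb sum_distrib_left by (rule sum.cong) (simp_all add: algebra_simps)
  finally show ?thesis .
qed

lemma binomial_score_sum_eq:
  fixes p :: real
  shows "(\<Sum>r=0..m. real (m choose r) * p ^ r * (1 - p) ^ (m - r) * f r * (real r - real m * p))
    = real m * p * (1 - p) * binomial_mean (m - 1) (forward_diff f) p"
proof (cases m)
  case (Suc k)
  have score: "real r - real m * p = real r * (1 - p) - real (m - r) * p" if "r \<le> m" for r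
    using that by (simp add: algebra_simps)
  have "(\<Sum>r=0..m. real (m choose r) * p ^ r * (1 - p) ^ (m - r) * f r * (real r - real m * p))
    = (1 - p) * (\<Sum>r=0..m. real r * real (m choose r) * p ^ r * (1 - p) ^ (m - r) * f r)
      - p * (\<Sum>r=0..m. real (m - r) * real (m choose r) * p ^ r * (1 - p) ^ (m - r) * f r)"
    unfolding sum_distrib_left sum_subtractf[symmetric]
    by (rule sum.cong) (simp_all add: score algebra_simps)
  then show ?thesis
    unfolding Suc sum_binomial_index_weighted sum_binomial_coindex_weighted binomial_mean_def forward_diff_def
    by (simp add: sum_subtractf algebra_simps)
qed simp

lemma binomial_normalized_score_sum_eq:
  fixes p :: real
  assumes "0 < p" "p < 1"
  shows "(\<Sum>r=0..m. real (m choose r) * p ^ r * (1 - p) ^ (m - r) * f r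
      * ((real r - p * real m) / (p * (1 - p))))
    = real m * binomial_mean (m - 1) (forward_diff f) p"
proof -
  have "(\<Sum>r=0..m. real (m choose r) * p ^ r * (1 - p) ^ (m - r) * f r
      * ((real r - p * real m) / (p * (1 - p))))
    = (\<Sum>r=0..m. real (m choose r) * p ^ r * (1 - p) ^ (m - r) * f r * (real r - real m * p))
      / (p * (1 - p))"
    unfolding sum_divide_distrib by (intro sum.cong) (simp_all add: mult.commute)
  also have "\<dots> = real m * binomial_mean (m - 1) (forward_diff f) p"
    using assms unfolding binomial_score_sum_eq by simp
  finally show ?thesis .
qed

lemma binomial_weight_has_real_derivative:
  fixes p :: real
  assumes "0 < p" "p < 1" "r \<le> m"
  shows "((\<lambda>x. x ^ r * (1 - x) ^ (m - r)) has_real_derivative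
    p ^ r * (1 - p) ^ (m - r) * (real r - real m * p) / (p * (1 - p))) (at p)"
proof -
  have pow_pred: "real n * x ^ (n - 1) = real n * x ^ n / x" if "x \<noteq> 0" for n and x :: real
    using that by (cases n) auto
  have "p \<noteq> 0" "1 - p \<noteq> 0"
    using assms by simp_all
  have "((\<lambda>x. x ^ r * (1 - x) ^ (m - r)) has_real_derivative
      real r * p ^ (r - 1) * (1 - p) ^ (m - r) - p ^ r * (real (m - r) * (1 - p) ^ (m - r - 1))) (at p)"
    by (auto intro!: derivative_eq_intros simp: algebra_simps)
  also have "real r * p ^ (r - 1) * (1 - p) ^ (m - r) - p ^ r * (real (m - r) * (1 - p) ^ (m - r - 1))
      = p ^ r * (1 - p) ^ (m - r) * (real r - real m * p) / (p * (1 - p))"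
    using assms unfolding pow_pred[OF \<open>p \<noteq> 0\<close>] pow_pred[OF \<open>1 - p \<noteq> 0\<close>]
    by (simp add: field_simps)
  finally show ?thesis .
qed

lemma binomial_mean_has_real_derivative:
  fixes p :: real
  assumes "0 < p" "p < 1"
  shows "(binomial_mean m f has_real_derivative
    real m * binomial_mean (m - 1) (forward_diff f) p) (at p)"
proof -
  have "((\<lambda>x. real (m choose r) * x ^ r * (1 - x) ^ (m - r) * f r) has_real_derivative
      real (m choose r) * p ^ r * (1 - p) ^ (m - r) * f r * ((real r - p * real m) / (p * (1 - p))))
      (at p)" if "r \<le> m" for r
    using DERIV_cmult[OF binomial_weight_has_real_derivative[OF assms that],
        of "real (m choose r) * f r"]
    by (simp add: ac_simps)
  then show ?thesis
    unfolding binomial_normalized_score_sum_eq[OF assms, symmetric]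
    unfolding binomial_mean_def[abs_def]
    by (intro DERIV_sum) auto
qed

lemma binomial_mean_nonneg:
  assumes "\<And>s. f s \<ge> 0" "0 \<le> p" "p \<le> 1"
  shows "binomial_mean m f p \<ge> 0"
  unfolding binomial_mean_def using assms by (intro sum_nonneg mult_nonneg_nonneg) auto

lemma binomial_mean_mono:
  assumes "mono f"
  shows "mono_on {0..1} (binomial_mean m f)"
proof (rule mono_onI)
  fix a b :: real
  assume "a \<in> {0..1}" "b \<in> {0..1}" "a \<le> b"
  show "binomial_mean m f a \<le> binomial_mean m f b"
  proof (rule DERIV_nonneg_imp_increasing_open[OF \<open>a \<le> b\<close>])
    fix x assume "a < x" "x < b"
    then have "0 < x" "x < 1"
      using \<open>a \<in> {0..1}\<close> \<open>b \<in> {0..1}\<close> by auto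
    moreover have "forward_diff f s \<ge> 0" for s
      using monoD[OF assms, of s "Suc s"] by (simp add: forward_diff_def)
    ultimately have "0 \<le> real m * binomial_mean (m - 1) (forward_diff f) x"
      by (intro mult_nonneg_nonneg binomial_mean_nonneg) auto
    then show "\<exists>y. (binomial_mean m f has_real_derivative y) (at x) \<and> 0 \<le> y"
      using binomial_mean_has_real_derivative[OF \<open>0 < x\<close> \<open>x < 1\<close>] by blast
  next
    show "continuous_on {a..b} (binomial_mean m f)"
      unfolding binomial_mean_def[abs_def] by (intro continuous_intros)
  qed
qed

lemma two_div_le_inverse_sum:
  fixes u t :: real
  assumes "\<bar>t\<bar> < u"
  shows "2 / u \<le> 1 / (u - t) + 1 / (u + t)"
proof -
  have "0 < u - t" "0 < u + t" "0 < u"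
    using assms by auto
  have "2 / u = 2 * u / (u * u)"
    using \<open>0 < u\<close> by simp
  also have "\<dots> \<le> 2 * u / ((u - t) * (u + t))"
  proof (rule divide_left_mono)
    show "(u - t) * (u + t) \<le> u * u"
      by (simp add: algebra_simps)
  qed (use \<open>0 < u - t\<close> \<open>0 < u + t\<close> \<open>0 < u\<close> in auto)
  also have "\<dots> = 1 / (u - t) + 1 / (u + t)"
    using \<open>0 < u - t\<close> \<open>0 < u + t\<close> by (simp add: field_simps)
  finally show ?thesis .
qed

lemma nu_hat_forward_diff_mono:
  fixes V c :: real
  assumes "V \<ge> 0" "c \<ge> 0"
  shows "mono (forward_diff (\<lambda>r. nu_hat V (real r * c)))"
proof (rule mono_iff_le_Suc[THEN iffD2], intro allI)
  fix s
  define t where "t = V * c"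
  define u where "u = 1 + t * (real s + 1)"
  have "0 \<le> t" "0 \<le> t * real s"
    using assms by (simp_all add: t_def)
  moreover have "u = 1 + t * real s + t"
    by (simp add: u_def algebra_simps)
  ultimately have "\<bar>t\<bar> < u"
    by linarith
  then have "V * (2 / u) \<le> V * (1 / (u - t) + 1 / (u + t))"
    using assms by (intro mult_left_mono two_div_le_inverse_sum) auto
  then show "forward_diff (\<lambda>r. nu_hat V (real r * c)) s
    \<le> forward_diff (\<lambda>r. nu_hat V (real r * c)) (Suc s)"
    by (simp add: forward_diff_def nu_hat_def t_def u_def field_simps)
qed

lemma rho_mono: "mono_on {0..1} rho"
proof (rule mono_onI)
  fix a b :: real
  assume "a \<in> {0..1}" "b \<in> {0..1}" "a \<le> b"
  show "rho a \<le> rho b"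
  proof (rule DERIV_nonneg_imp_increasing_open[OF \<open>a \<le> b\<close>])
    fix x assume "a < x" "x < b"
    have "(rho has_real_derivative (1 - x) * exp (- x)) (at x)"
      unfolding rho_def[abs_def] by (auto intro!: derivative_eq_intros simp: algebra_simps)
    moreover have "0 \<le> (1 - x) * exp (- x)"
      using \<open>x < b\<close> \<open>b \<in> {0..1}\<close> by simp
    ultimately show "\<exists>y. (rho has_real_derivative y) (at x) \<and> 0 \<le> y"
      by blast
  next
    show "continuous_on {a..b} rho"
      unfolding rho_def[abs_def] by (intro continuous_intros)
  qed
qed

lemma rho_bounds:
  assumes "0 < \<zeta>" "\<zeta> < 1"
  shows "0 < rho \<zeta>" "rho \<zeta> < 1"
proof -
  show "0 < rho \<zeta>"
    using assms by (simp add: rho_def)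
  have "\<zeta> * exp (- \<zeta>) \<le> \<zeta>"
    using assms by (simp add: mult_left_le)
  then show "rho \<zeta> < 1"
    using assms unfolding rho_def by linarith
qed

lemma g_fun_eq_binomial_mean:
  assumes "0 < \<zeta>" "\<zeta> < 1"
  shows "g_fun S_A \<theta> lam B S_M \<zeta> V_k
    = real B * binomial_mean (B - 1)
        (forward_diff (\<lambda>r. nu_hat V_k (real r * S_A * S_M / (S_A + S_M)))) (rho \<zeta>)
      + lam * real B * (exp \<zeta> / (1 - \<zeta>)) * (1 + \<theta> * S_M)"
  unfolding g_fun_def binomial_normalized_score_sum_eq[OF rho_bounds[OF assms], symmetric] ..

theorem proposition6:
  fixes S_A \<theta> lam V_k S_M :: real and B :: nat
  assumes "S_A > 0" and "\<theta> \<ge> 0" and "lam \<ge> 0" and "B \<ge> 1"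
    and "0 < V_k" and "V_k \<le> 1" and "S_M \<ge> 0"
  shows "mono_on {0<..<1} (\<lambda>\<zeta>. g_fun S_A \<theta> lam B S_M \<zeta> V_k)"
proof (rule mono_onI)
  fix a b :: real
  assume a: "a \<in> {0<..<1}" and b: "b \<in> {0<..<1}" and "a \<le> b"
  define c where "c = S_A * S_M / (S_A + S_M)"
  have "c \<ge> 0"
    using assms by (simp add: c_def)
  then have "mono (forward_diff (\<lambda>r. nu_hat V_k (real r * c)))"
    using assms by (intro nu_hat_forward_diff_mono) auto
  moreover have "rho a \<in> {0..1}" "rho b \<in> {0..1}" "rho a \<le> rho b"
    using a b \<open>a \<le> b\<close> rho_bounds mono_onD[OF rho_mono] by (auto simp: less_imp_le)
  ultimately have mean_le: "binomial_mean (B - 1) (forward_diff (\<lambda>r. nu_hat V_k (real r * c))) (rho a)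
      \<le> binomial_mean (B - 1) (forward_diff (\<lambda>r. nu_hat V_k (real r * c))) (rho b)"
    by (intro mono_onD[OF binomial_mean_mono])
  have "exp a / (1 - a) \<le> exp b / (1 - b)"
    using a b \<open>a \<le> b\<close> by (intro frac_le) auto
  then have penalty_le: "lam * real B * (exp a / (1 - a)) * (1 + \<theta> * S_M)
      \<le> lam * real B * (exp b / (1 - b)) * (1 + \<theta> * S_M)"
    using assms by (intro mult_right_mono mult_left_mono) auto
  have "(\<lambda>r. nu_hat V_k (real r * S_A * S_M / (S_A + S_M))) = (\<lambda>r. nu_hat V_k (real r * c))"
    by (simp add: c_def mult.assoc)
  then show "g_fun S_A \<theta> lam B S_M a V_k \<le> g_fun S_A \<theta> lam B S_M b V_k"
    using a b mean_le penalty_le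
    by (simp add: g_fun_eq_binomial_mean add_mono mult_left_mono)
qed

end
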